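(* Let $f_{SH}(x)=\sqrt{\frac{x^2+1}{2}}-\frac{2x}{x+1}$ for $x\in(0,\infty)$, let $f_{SH}^*(u)=u\,f_{SH}\!\left(\frac{1-u}{u}\right)$ for $u\in(0,1)$, extended by continuity to $[0,1]$ (explicitly $f_{SH}^*(u)=\frac{\sqrt2}{2}\sqrt{u^2+(1-u)^2}-2u(1-u)$), and define $\overline M_{SH}(C_1,C_2)=E_X\{f_{SH}^*(P(C_2\mid x))\}$. Then $$P_e\le \frac12\left[1-\frac{2}{\sqrt2}\,\overline M_{SH}(C_1,C_2)\right].$$
   Context: Two-class decision problem: classes $C_1,C_2$, an observation $x$ in a space $\mathrm X$ with density $p(x)$, and a posteriori probabilities $P(C_1\mid x),P(C_2\mid x)\ge0$ with $P(C_1\mid x)+P(C_2\mid x)=1$. $E_X\{g(x)\}=\int_{\mathrm X} g(x)p(x)\,dx$. $P_e=E_X\{\min(P(C_1\mid x),P(C_2\mid x))\}$ is the Bayesian probability of error. *)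

theory Defs
  imports "HOL-Analysis.Analysis"
begin

text \<open>Expectation over the observation space X with density p (w.r.t. the
  reference measure M on X): E_X g = integral of g(x) p(x).\<close>
definition E_X :: "'a measure \<Rightarrow> ('a \<Rightarrow> real) \<Rightarrow> ('a \<Rightarrow> real) \<Rightarrow> real" where
  "E_X M p g = (LINT x|M. g x * p x)"

definition P_e :: "'a measure \<Rightarrow> ('a \<Rightarrow> real) \<Rightarrow> ('a \<Rightarrow> real) \<Rightarrow> ('a \<Rightarrow> real) \<Rightarrow> real" where
  "P_e M p P1 P2 = E_X M p (\<lambda>x. min (P1 x) (P2 x))"

definition f_SH :: "real \<Rightarrow> real" where
  "f_SH x = sqrt ((x\<^sup>2 + 1) / 2) - 2 * x / (x + 1)"

definition f_SH_star :: "real \<Rightarrow> real" where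
  "f_SH_star u = (if 0 < u \<and> u < 1 then u * f_SH ((1 - u) / u)
     else sqrt 2 / 2 * sqrt (u\<^sup>2 + (1 - u)\<^sup>2) - 2 * u * (1 - u))"

definition M_SH :: "'a measure \<Rightarrow> ('a \<Rightarrow> real) \<Rightarrow> ('a \<Rightarrow> real) \<Rightarrow> real" where
  "M_SH M p P2 = E_X M p (\<lambda>x. f_SH_star (P2 x))"

end

theory Submission
  imports Defs
begin

text \<open>Put \<open>w = \<bar>1 - 2u\<bar>\<close>. Then \<open>min u (1 - u) = (1 - w)/2\<close> and
  \<open>(2/\<surd>2) f\<^sup>*\<^sub>S\<^sub>H(u) = \<surd>((1 + w\<^sup>2)/2) - \<surd>2 (1 - w\<^sup>2)/2\<close>, so the
  pointwise form of the bound is \<open>\<surd>((1 + w\<^sup>2)/2) \<le> w + \<surd>2 (1 - w\<^sup>2)/2\<close>;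
  after squaring, the difference of the two sides is \<open>w (1 - w\<^sup>2)(\<surd>2 - w/2) \<ge> 0\<close>.
  Integrating the pointwise bound against the density \<open>p\<close> gives the theorem.\<close>

lemma f_SH_star_eq: "f_SH_star u = sqrt 2 / 2 * sqrt (u\<^sup>2 + (1 - u)\<^sup>2) - 2 * u * (1 - u)"
proof (cases "0 < u \<and> u < 1")
  case True
  then have u: "0 < u" "u < 1" by auto
  have "u * sqrt ((((1 - u) / u)\<^sup>2 + 1) / 2) = sqrt (u\<^sup>2 * ((((1 - u) / u)\<^sup>2 + 1) / 2))"
    using u real_sqrt_mult[of "u\<^sup>2" "(((1 - u) / u)\<^sup>2 + 1) / 2"] by simp
  also have "u\<^sup>2 * ((((1 - u) / u)\<^sup>2 + 1) / 2) = (u\<^sup>2 + (1 - u)\<^sup>2) / 2"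
    using u by (simp add: field_simps power2_eq_square)
  also have "sqrt ((u\<^sup>2 + (1 - u)\<^sup>2) / 2) = sqrt 2 / 2 * sqrt (u\<^sup>2 + (1 - u)\<^sup>2)"
    by (simp add: real_sqrt_divide field_simps)
  finally have root: "u * sqrt ((((1 - u) / u)\<^sup>2 + 1) / 2) = \<dots>" .
  have "u * (2 * ((1 - u) / u) / ((1 - u) / u + 1)) = 2 * u * (1 - u)"
    using u by (simp add: field_simps)
  with True root show ?thesis
    unfolding f_SH_star_def f_SH_def by (simp add: right_diff_distrib)
qed (auto simp: f_SH_star_def)

lemma sqrt_mean_square_le:
  fixes w :: real
  assumes "0 \<le> w" "w \<le> 1"
  shows "sqrt ((1 + w\<^sup>2) / 2) \<le> w + sqrt 2 * (1 - w\<^sup>2) / 2"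
proof (rule real_le_lsqrt)
  have w2: "w\<^sup>2 \<le> 1" using assms by (simp add: power_le_one)
  then show "0 \<le> w + sqrt 2 * (1 - w\<^sup>2) / 2" using assms by simp
  have "(w + s * (1 - w\<^sup>2) / 2)\<^sup>2 - (1 + w\<^sup>2) / 2
      = w * (1 - w\<^sup>2) * (s - w / 2) + (s\<^sup>2 - 2) * (1 - w\<^sup>2)\<^sup>2 / 4" for s :: real
    by (simp add: power2_eq_square field_simps)
  from this[of "sqrt 2"] have "(w + sqrt 2 * (1 - w\<^sup>2) / 2)\<^sup>2 - (1 + w\<^sup>2) / 2
      = w * (1 - w\<^sup>2) * (sqrt 2 - w / 2)"
    by simp
  moreover have "0 \<le> w * (1 - w\<^sup>2) * (sqrt 2 - w / 2)"
  proof -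
    have "1 \<le> sqrt 2" by simp
    with assms have "w / 2 \<le> sqrt 2" by linarith
    with assms w2 show ?thesis by (intro mult_nonneg_nonneg) auto
  qed
  ultimately show "(1 + w\<^sup>2) / 2 \<le> (w + sqrt 2 * (1 - w\<^sup>2) / 2)\<^sup>2"
    by linarith
qed

lemma min_le_f_SH_star_bound:
  assumes "0 \<le> u" "u \<le> 1"
  shows "min (1 - u) u \<le> 1/2 * (1 - 2 / sqrt 2 * f_SH_star u)"
proof -
  define w where "w = \<bar>1 - 2 * u\<bar>"
  have w: "0 \<le> w" "w \<le> 1" using assms unfolding w_def by auto
  have square_sum: "u\<^sup>2 + (1 - u)\<^sup>2 = (1 + w\<^sup>2) / 2"
    and product: "u * (1 - u) = (1 - w\<^sup>2) / 4"
    unfolding w_def by (simp_all add: power2_eq_square algebra_simps)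
  have "2 / sqrt 2 * f_SH_star u = sqrt (u\<^sup>2 + (1 - u)\<^sup>2) - sqrt 2 * (2 * (u * (1 - u)))"
    unfolding f_SH_star_eq by (simp add: field_simps)
  also have "\<dots> = sqrt ((1 + w\<^sup>2) / 2) - sqrt 2 * (1 - w\<^sup>2) / 2"
    unfolding square_sum product by simp
  finally have "2 / sqrt 2 * f_SH_star u = \<dots>" .
  moreover have "min (1 - u) u = (1 - w) / 2"
    unfolding w_def by (auto simp: min_def abs_if)
  ultimately show ?thesis
    using sqrt_mean_square_le[OF w] by simp
qed

lemma abs_f_SH_star_le_one:
  assumes "0 \<le> u" "u \<le> 1"
  shows "\<bar>f_SH_star u\<bar> \<le> 1"
proof -
  have "u\<^sup>2 + (1 - u)\<^sup>2 \<le> 1"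
    using assms mult_left_mono[of u 1 u] mult_left_mono[of "1 - u" 1 "1 - u"]
    by (simp add: power2_eq_square algebra_simps)
  moreover have "sqrt 2 \<le> 2"
    using real_sqrt_le_mono[of 2 "2\<^sup>2"] by simp
  ultimately have "sqrt 2 / 2 * sqrt (u\<^sup>2 + (1 - u)\<^sup>2) \<le> 1"
    by (intro mult_le_one) auto
  moreover have "0 \<le> sqrt 2 / 2 * sqrt (u\<^sup>2 + (1 - u)\<^sup>2)"
    by simp
  moreover have "0 \<le> 2 * u * (1 - u)"
    using assms by simp
  moreover have "2 * u * (1 - u) = 1/2 - 2 * (u - 1/2)\<^sup>2"
    by (simp add: power2_eq_square algebra_simps)
  then have "2 * u * (1 - u) \<le> 1/2"
    by simp
  ultimately show ?thesis
    unfolding f_SH_star_eq abs_le_iff by linarith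
qed

lemma integrable_bounded_mult_density:
  fixes f p :: "'a \<Rightarrow> real"
  assumes "integrable M p" "f \<in> borel_measurable M" "p \<in> borel_measurable M"
    and "\<And>x. x \<in> space M \<Longrightarrow> \<bar>f x\<bar> \<le> B"
  shows "integrable M (\<lambda>x. f x * p x)"
proof (rule Bochner_Integration.integrable_bound[where f = "\<lambda>x. B * p x"])
  show "integrable M (\<lambda>x. B * p x)" using assms(1) by simp
  show "AE x in M. norm (f x * p x) \<le> norm (B * p x)"
  proof (rule AE_I2)
    fix x assume "x \<in> space M"
    then have "\<bar>f x\<bar> \<le> \<bar>B\<bar>" using assms(4) by force
    then show "norm (f x * p x) \<le> norm (B * p x)"
      by (simp add: abs_mult mult_right_mono)
  qed
qed (use assms(2,3) in measurable)

theorem mainTheorem6: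
  fixes M :: "'a measure" and p P1 P2 :: "'a \<Rightarrow> real"
  assumes p_meas: "p \<in> borel_measurable M"
    and p_nonneg: "\<And>x. x \<in> space M \<Longrightarrow> p x \<ge> 0"
    and p_int: "integrable M p"
    and p_total: "(LINT x|M. p x) = 1"
    and P1_meas: "P1 \<in> borel_measurable M"
    and P2_meas: "P2 \<in> borel_measurable M"
    and P1_nonneg: "\<And>x. x \<in> space M \<Longrightarrow> P1 x \<ge> 0"
    and P2_nonneg: "\<And>x. x \<in> space M \<Longrightarrow> P2 x \<ge> 0"
    and P_sum: "\<And>x. x \<in> space M \<Longrightarrow> P1 x + P2 x = 1"
  shows "P_e M p P1 P2 \<le> 1/2 * (1 - 2 / sqrt 2 * M_SH M p P2)"
proof -
  have P2_le: "P2 x \<le> 1" if "x \<in> space M" for x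
    using P_sum[OF that] P1_nonneg[OF that] by simp
  have f_meas: "(\<lambda>x. f_SH_star (P2 x)) \<in> borel_measurable M"
    unfolding f_SH_star_eq using P2_meas by measurable
  have int_f: "integrable M (\<lambda>x. f_SH_star (P2 x) * p x)"
    using abs_f_SH_star_le_one P2_nonneg P2_le
    by (intro integrable_bounded_mult_density[OF p_int f_meas p_meas]) blast
  have int_min: "integrable M (\<lambda>x. min (P1 x) (P2 x) * p x)"
    using P1_nonneg P2_nonneg P2_le P1_meas P2_meas
    by (intro integrable_bounded_mult_density[OF p_int _ p_meas, where B = 1])
      (auto simp: min_le_iff_disj)
  have "P_e M p P1 P2 = (LINT x|M. min (P1 x) (P2 x) * p x)"
    unfolding P_e_def E_X_def ..
  also have "\<dots> \<le> (LINT x|M. 1/2 * p x - 1 / sqrt 2 * (f_SH_star (P2 x) * p x))"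
  proof (rule integral_mono[OF int_min])
    fix x assume x: "x \<in> space M"
    have "min (P1 x) (P2 x) \<le> 1/2 * (1 - 2 / sqrt 2 * f_SH_star (P2 x))"
      using min_le_f_SH_star_bound[OF P2_nonneg[OF x] P2_le[OF x]] P_sum[OF x]
      by (simp add: eq_diff_eq[symmetric])
    from mult_right_mono[OF this p_nonneg[OF x]]
    show "min (P1 x) (P2 x) * p x \<le> 1/2 * p x - 1 / sqrt 2 * (f_SH_star (P2 x) * p x)"
      by (simp add: algebra_simps)
  qed (use p_int int_f in simp)
  also have "\<dots> = 1/2 * (LINT x|M. p x) - 1 / sqrt 2 * (LINT x|M. f_SH_star (P2 x) * p x)"
    using p_int int_f by simp
  also have "\<dots> = 1/2 * (1 - 2 / sqrt 2 * M_SH M p P2)"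
    unfolding M_SH_def E_X_def p_total by (simp add: field_simps)
  finally show ?thesis .
qed

end
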